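(* Let $G$ be a finite abelian group, $k\ge d+1\ge2$ integers, and let $V_0=\{(0,1),\dots,(0,k)\}$ and $I=\{\iota_1,\dots,\iota_{d+1}\}$ be disjoint index sets. For $\omega\in\{0,1\}^{d+1}\setminus\{0\}$ let $\phi_\omega:G^{V_0\cup I}\to G$ be the linear form $$\phi_\omega(\mathbf{x})=\sum_{i=1}^{d+1}\big((1-\omega_i)x_{(0,i)}+\omega_i x_{\iota_i}\big)+\sum_{i=d+2}^{k}x_{(0,i)},$$ and let $\Phi_1=\{\phi_\omega:\omega\in\{0,1\}^{d+1}\setminus\{0\}\}$. Then for every $f:G\to[-1,1]$, $$\|f\|_{\square(\Phi_1)}\ge\|f\|_{U^{d+1}}^{2^{d+1}}.$$
   Context: For a linear system $\Phi$ of linear forms $G^{W}\to G$ with $0/1$ coefficients (each determined by its support $\mathrm{supp}(\phi)\subseteq W$ via $\phi(\mathbf{x})=\sum_{v\in\mathrm{supp}(\phi)}x_v$), let $V(\Phi)=V_0\cup\bigcup_{\phi\in\Phi}\mathrm{supp}(\phi)$ and define, for $f:G\to\mathbb{R}$, $$\|f\|_{\square(\Phi)}=\max_{u_\phi:G\to[-1,1]\ (\phi\in\Phi)}\mathbb{E}_{\mathbf{x}\in G^{V(\Phi)}}\Big[f\Big(\sum_{v\in V_0}x_v\Big)\prod_{\phi\in\Phi}u_\phi(\phi(\mathbf{x}))\Big].$$ $\|f\|_{U^{m}}=\big(\mathbb{E}_{x,h_1,\dots,h_m\in G}\prod_{\omega\in\{0,1\}^m}f(x+\sum_i\omega_ih_i)\big)^{1/2^m}$.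 *)

theory Defs
  imports Complex_Main "HOL-Library.FuncSet"
begin

definition avg :: "'b set \<Rightarrow> ('b \<Rightarrow> real) \<Rightarrow> real" where
  "avg A g = (\<Sum>a\<in>A. g a) / real (card A)"

text \<open>A linear form with 0/1 coefficients is identified with its support
  (a set of variables); a linear system is a set of supports.
  V(Phi) = V0 union the union of all supports.\<close>
definition sys_vars :: "'v set \<Rightarrow> 'v set set \<Rightarrow> 'v set" where
  "sys_vars V0 Phi = V0 \<union> \<Union>Phi"

text \<open>The box norm of f relative to the system Phi (the maximum is written as a
  supremum; it is attained since the objective is continuous on a compact set).\<close>
definition box_norm :: "'v set \<Rightarrow> 'v set set \<Rightarrow> ('a::{ab_group_add,finite} \<Rightarrow> real) \<Rightarrow> real" where
  "box_norm V0 Phi f = Sup {avg (PiE (sys_vars V0 Phi) (\<lambda>_. UNIV))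
        (\<lambda>x. f (\<Sum>v\<in>V0. x v) * (\<Prod>\<phi>\<in>Phi. u \<phi> (\<Sum>v\<in>\<phi>. x v)))
      | u :: 'v set \<Rightarrow> 'a \<Rightarrow> real. \<forall>\<phi>\<in>Phi. \<forall>y. u \<phi> y \<in> {-1..1}}"

text \<open>Gowers U^m norm; omega in {0,1}^m is encoded as the subset T of {1..m}
  of coordinates equal to 1.\<close>
definition gowers_norm :: "nat \<Rightarrow> ('a::{ab_group_add,finite} \<Rightarrow> real) \<Rightarrow> real" where
  "gowers_norm m f = (avg (UNIV \<times> PiE {1..m} (\<lambda>_. UNIV))
      (\<lambda>(x, h). \<Prod>T\<in>Pow {1..m}. f (x + (\<Sum>i\<in>T. h i)))) powr (1 / 2 ^ m)"

text \<open>Variables: (0,i) for i in {1..k} form V0; iota_i is encoded as (1,i).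
  Support of phi_omega for omega : {1..d+1} -> {0,1}.\<close>
definition phi_supp :: "nat \<Rightarrow> nat \<Rightarrow> (nat \<Rightarrow> nat) \<Rightarrow> (nat \<times> nat) set" where
  "phi_supp k d \<omega> =
     {(0, i) | i. 1 \<le> i \<and> i \<le> d + 1 \<and> \<omega> i = 0}
   \<union> {(1, i) | i. 1 \<le> i \<and> i \<le> d + 1 \<and> \<omega> i = 1}
   \<union> {(0, i) | i. d + 2 \<le> i \<and> i \<le> k}"

definition V0_set :: "nat \<Rightarrow> (nat \<times> nat) set" where
  "V0_set k = {(0, i) | i. 1 \<le> i \<and> i \<le> k}"

definition Phi1 :: "nat \<Rightarrow> nat \<Rightarrow> (nat \<times> nat) set set" where
  "Phi1 k d = phi_supp k d ` (({1..d+1} \<rightarrow>\<^sub>E {0, 1}) - {(\<lambda>i\<in>{1..d+1}. 0)})"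

end

theory Submission
  imports Defs
begin

text \<open>Choosing every \<open>u\<^sub>\<phi>\<close> equal to \<open>f\<close> bounds the box norm from below by the average
  of \<open>f(\<Sum>\<^sub>v\<^sub>\<in>\<^sub>V\<^sub>0 x\<^sub>v) \<Prod>\<^sub>\<omega> f(\<phi>\<^sub>\<omega>(x))\<close>. Under the shear \<open>y = \<Sum>\<^sub>v\<^sub>\<in>\<^sub>V\<^sub>0 x\<^sub>v\<close>,
  \<open>h\<^sub>i = x(\<iota>\<^sub>i) - x(0,i)\<close> each \<open>\<phi>\<^sub>\<omega>(x)\<close> becomes \<open>y\<close> plus the sum of those \<open>h\<^sub>i\<close> with
  \<open>\<omega>\<^sub>i = 1\<close>, and \<open>(y, h)\<close> is again uniformly distributed; so this average is exactly the Gowers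
  average of \<open>\<Prod>\<^sub>T f(y + \<Sum>\<^sub>i\<^sub>\<in>\<^sub>T h\<^sub>i)\<close>. Splitting off one direction writes the Gowers average as
  an average of squares; hence it is nonnegative and equals the \<open>2\<^sup>d\<^sup>+\<^sup>1\<close>-th power of the
  Gowers norm.\<close>

definition gowers_term :: "('a::ab_group_add \<Rightarrow> real) \<Rightarrow> 'i set \<Rightarrow> 'a \<Rightarrow> ('i \<Rightarrow> 'a) \<Rightarrow> real" where
  "gowers_term f I x h = (\<Prod>T\<in>Pow I. f (x + (\<Sum>i\<in>T. h i)))"

lemma gowers_term_insert:
  assumes "finite I" "a \<notin> I"
  shows "gowers_term f (insert a I) x h = gowers_term f I x h * gowers_term f I (x + h a) h"
proof -
  have inj: "inj_on (insert a) (Pow I)"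
    using assms(2) by (intro inj_onI) (metis PowD insert_ident subset_iff)
  have "gowers_term f (insert a I) x h
      = gowers_term f I x h * (\<Prod>T\<in>insert a ` Pow I. f (x + (\<Sum>i\<in>T. h i)))"
    unfolding gowers_term_def Pow_insert using assms by (subst prod.union_disjoint) auto
  also have "(\<Prod>T\<in>insert a ` Pow I. f (x + (\<Sum>i\<in>T. h i))) = gowers_term f I (x + h a) h"
    unfolding gowers_term_def prod.reindex[OF inj] comp_def
  proof (intro prod.cong refl)
    fix T assume "T \<in> Pow I"
    then have "finite T" "a \<notin> T" using assms finite_subset by auto
    then show "f (x + sum h (insert a T)) = f (x + h a + sum h T)" by (simp add: add.assoc)
  qed
  finally show ?thesis .
qed

lemma gowers_term_cong:
  "(\<And>i. i \<in> I \<Longrightarrow> h i = h' i) \<Longrightarrow> gowers_term f I x h = gowers_term f I x h'"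
  unfolding gowers_term_def by (intro prod.cong refl arg_cong[where f = f] arg_cong2[where f = "(+)"] sum.cong) auto

lemma gowers_term_restrict: "gowers_term f I x (restrict h I) = gowers_term f I x h"
  by (rule gowers_term_cong) simp

lemma sum_UNIV_translate:
  fixes g :: "'a::{ab_group_add,finite} \<Rightarrow> 'b::comm_monoid_add"
  shows "(\<Sum>t\<in>UNIV. g (y + t)) = (\<Sum>z\<in>UNIV. g z)"
  by (rule sum.reindex_bij_witness[where j = "\<lambda>t. y + t" and i = "\<lambda>z. z - y"]) auto

lemma bij_betw_PiE_insert:
  assumes "a \<notin> I"
  shows "bij_betw (\<lambda>(t, h). h(a := t)) (A a \<times> PiE I A) (PiE (insert a I) A)"
  unfolding bij_betw_def using inj_combinator[OF assms] PiE_insert_eq[of a I A] by simp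

lemma gowers_sum_nonneg:
  fixes f :: "'a::{ab_group_add,finite} \<Rightarrow> real"
  assumes "finite I" "I \<noteq> {}"
  shows "0 \<le> (\<Sum>(x, h)\<in>UNIV \<times> PiE I (\<lambda>_. UNIV). gowers_term f I x h)"
proof -
  obtain a where "a \<in> I" using assms(2) by blast
  define J where "J = I - {a}"
  have I: "I = insert a J" "a \<notin> J" "finite J"
    using \<open>a \<in> I\<close> assms(1) unfolding J_def by auto
  define g where "g h x = gowers_term f J x h" for h x
  have bij: "bij_betw (map_prod id (\<lambda>(t, h). h(a := t)))
      (UNIV \<times> UNIV \<times> PiE J (\<lambda>_. UNIV)) (UNIV \<times> PiE I (\<lambda>_. UNIV :: 'a set))"
    unfolding I(1) by (intro bij_betw_map_prod bij_betw_id bij_betw_PiE_insert I(2))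
  have "(\<Sum>(x, h)\<in>UNIV \<times> PiE I (\<lambda>_. UNIV). gowers_term f I x h)
      = (\<Sum>(x, t, h)\<in>UNIV \<times> UNIV \<times> PiE J (\<lambda>_. UNIV). gowers_term f I x (h(a := t)))"
    by (simp add: sum.reindex_bij_betw[OF bij, symmetric] split_beta)
  also have "\<dots> = (\<Sum>(x, t, h)\<in>UNIV \<times> UNIV \<times> PiE J (\<lambda>_. UNIV). g h x * g h (x + t))"
  proof (intro sum.cong refl, clarify)
    fix x t h
    have "gowers_term f J y (h(a := t)) = g h y" for y
      unfolding g_def using I(2) by (intro gowers_term_cong) auto
    then show "gowers_term f I x (h(a := t)) = g h x * g h (x + t)"
      unfolding I(1) gowers_term_insert[OF I(3,2)] by simp
  qed
  also have "\<dots> = (\<Sum>h\<in>PiE J (\<lambda>_. UNIV). (\<Sum>x\<in>UNIV. g h x)\<^sup>2)"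
  proof -
    have "(\<Sum>x\<in>UNIV. \<Sum>t\<in>UNIV. g h x * g h (x + t)) = (\<Sum>x\<in>UNIV. g h x)\<^sup>2" for h
      by (simp add: sum_distrib_left[symmetric] sum_UNIV_translate power2_eq_square sum_distrib_right)
    then show ?thesis
      by (simp add: sum.cartesian_product[symmetric] sum.swap[of _ "PiE J (\<lambda>_. UNIV)"])
  qed
  finally show ?thesis by (simp add: sum_nonneg)
qed

lemma gowers_norm_power:
  fixes f :: "'a::{ab_group_add,finite} \<Rightarrow> real"
  assumes "1 \<le> m"
  shows "gowers_norm m f ^ 2 ^ m = avg (UNIV \<times> PiE {1..m} (\<lambda>_. UNIV)) (\<lambda>(x, h). gowers_term f {1..m} x h)"
proof -
  let ?A = "avg (UNIV \<times> PiE {1..m} (\<lambda>_. UNIV)) (\<lambda>(x, h). gowers_term f {1..m} x h)"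
  have "0 \<le> ?A" unfolding avg_def using gowers_sum_nonneg[of "{1..m}" f] assms by simp
  then have "root (2 ^ m) ?A ^ 2 ^ m = ?A" by simp
  then show ?thesis
    using \<open>0 \<le> ?A\<close> by (simp add: gowers_norm_def gowers_term_def root_powr_inverse)
qed

lemma sum_PiE_sum:
  fixes g :: "'a::{ab_group_add,finite} \<Rightarrow> 'b::semiring_1"
  assumes "finite V" "a \<in> V"
  shows "(\<Sum>y\<in>PiE V (\<lambda>_. UNIV). g (\<Sum>v\<in>V. y v))
       = of_nat (card (PiE (V - {a}) (\<lambda>_. UNIV :: 'a set))) * (\<Sum>s\<in>UNIV. g s)"
proof -
  define J where "J = V - {a}"
  have V: "V = insert a J" "a \<notin> J" "finite J" using assms unfolding J_def by auto
  have sum_upd: "(\<Sum>v\<in>V. (h(a := t)) v) = (\<Sum>v\<in>J. h v) + t" for h :: "_ \<Rightarrow> 'a" and t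
  proof -
    have "(\<Sum>v\<in>J. (h(a := t)) v) = (\<Sum>v\<in>J. h v)" using V(2) by (intro sum.cong) auto
    then show ?thesis unfolding V(1) using V(2,3) by (simp add: add.commute)
  qed
  have "(\<Sum>y\<in>PiE V (\<lambda>_. UNIV). g (\<Sum>v\<in>V. y v)) = (\<Sum>(t, h)\<in>UNIV \<times> PiE J (\<lambda>_. UNIV). g ((\<Sum>v\<in>J. h v) + t))"
  proof -
    have "bij_betw (\<lambda>(t, h). h(a := t)) (UNIV \<times> PiE J (\<lambda>_. UNIV)) (PiE V (\<lambda>_. UNIV :: 'a set))"
      unfolding V(1) by (rule bij_betw_PiE_insert[OF V(2)])
    from sum.reindex_bij_betw[OF this, where g = "\<lambda>y. g (\<Sum>v\<in>V. y v)"]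
    show ?thesis by (simp add: split_beta sum_upd del: fun_upd_apply)
  qed
  also have "\<dots> = (\<Sum>h\<in>PiE J (\<lambda>_. UNIV). \<Sum>t\<in>UNIV. g ((\<Sum>v\<in>J. h v) + t))"
    by (simp add: sum.cartesian_product[symmetric] sum.swap[of _ UNIV])
  also have "\<dots> = (\<Sum>h\<in>PiE J (\<lambda>_. UNIV :: 'a set). \<Sum>s\<in>UNIV. g s)"
    by (simp add: sum_UNIV_translate)
  finally show ?thesis unfolding J_def by simp
qed

lemma avg_reindex_bij_betw: "bij_betw h A B \<Longrightarrow> avg A (\<lambda>x. g (h x)) = avg B g"
  by (simp add: avg_def sum.reindex_bij_betw bij_betw_same_card)

lemma avg_PiE_sum:
  fixes G :: "'a::{ab_group_add,finite} \<Rightarrow> 'p \<Rightarrow> real"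
  assumes "finite V" "V \<noteq> {}"
  shows "avg (PiE V (\<lambda>_. UNIV) \<times> P) (\<lambda>(y, p). G (\<Sum>v\<in>V. y v) p) = avg (UNIV \<times> P) (\<lambda>(s, p). G s p)"
proof -
  obtain a where a: "a \<in> V" using assms(2) by blast
  define c where "c = card (PiE (V - {a}) (\<lambda>_. UNIV :: 'a set))"
  have "c > 0" unfolding c_def using assms(1) by (simp add: card_gt_0_iff finite_PiE PiE_eq_empty_iff)
  have card: "card (PiE V (\<lambda>_. UNIV :: 'a set)) = c * card (UNIV :: 'a set)"
    using sum_PiE_sum[OF assms(1) a, of "\<lambda>_. 1::nat"] unfolding c_def by simp
  have "(\<Sum>(y, p)\<in>PiE V (\<lambda>_. UNIV) \<times> P. G (\<Sum>v\<in>V. y v) p) = (\<Sum>p\<in>P. \<Sum>y\<in>PiE V (\<lambda>_. UNIV). G (\<Sum>v\<in>V. y v) p)"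
    by (simp add: sum.cartesian_product[symmetric] sum.swap[of _ P])
  also have "\<dots> = (\<Sum>p\<in>P. real c * (\<Sum>s\<in>UNIV. G s p))"
    unfolding c_def by (intro sum.cong refl sum_PiE_sum[OF assms(1) a])
  also have "\<dots> = real c * (\<Sum>(s, p)\<in>UNIV \<times> P. G s p)"
    by (simp add: sum_distrib_left sum.cartesian_product[symmetric] sum.swap[of _ P])
  finally show ?thesis
    using \<open>c > 0\<close> by (simp add: avg_def card card_cartesian_product)
qed

lemma bij_betw_shear:
  fixes a b :: "'i \<Rightarrow> 'v"
  assumes inj: "inj_on b I" and a: "a ` I \<subseteq> V" and b: "b ` I \<inter> V = {}"
  shows "bij_betw (\<lambda>x. (restrict x V, \<lambda>i\<in>I. x (b i) - x (a i)))
      (PiE (V \<union> b ` I) (\<lambda>_. UNIV :: 'a::ab_group_add set)) (PiE V (\<lambda>_. UNIV) \<times> PiE I (\<lambda>_. UNIV))"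
proof -
  define extend :: "('v \<Rightarrow> 'a) \<times> ('i \<Rightarrow> 'a) \<Rightarrow> 'v \<Rightarrow> 'a" where
    "extend = (\<lambda>(y, h) v. if v \<in> V then y v
       else if v \<in> b ` I then y (a (the_inv_into I b v)) + h (the_inv_into I b v) else undefined)"
  have extend_b: "extend (y, h) (b i) = y (a i) + h i" if "i \<in> I" for y h i
    using that b the_inv_into_f_f[OF inj] unfolding extend_def by auto
  have extend_V: "extend (y, h) v = y v" if "v \<in> V" for y h v
    using that unfolding extend_def by simp
  show ?thesis
  proof (rule bij_betw_byWitness[where f' = extend], safe)
    fix x :: "'v \<Rightarrow> 'a" assume x: "x \<in> PiE (V \<union> b ` I) (\<lambda>_. UNIV)"
    show "extend (restrict x V, \<lambda>i\<in>I. x (b i) - x (a i)) = x"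
    proof
      fix v
      consider "v \<in> V" | i where "i \<in> I" "v = b i" | "v \<notin> V \<union> b ` I" by blast
      then show "extend (restrict x V, \<lambda>i\<in>I. x (b i) - x (a i)) v = x v"
      proof cases
        case 3
        then show ?thesis using x unfolding extend_def by (auto simp: PiE_def extensional_def)
      qed (use a in \<open>auto simp: extend_V extend_b\<close>)
    qed
  next
    fix y h assume y: "y \<in> PiE V (\<lambda>_. UNIV :: 'a set)" and h: "h \<in> PiE I (\<lambda>_. UNIV :: 'a set)"
    show "restrict (extend (y, h)) V = y"
      using y by (auto simp: extend_V PiE_def extensional_def)
    show "(\<lambda>i\<in>I. extend (y, h) (b i) - extend (y, h) (a i)) = h"
      using h a by (force simp: extend_V extend_b PiE_def extensional_def)
  qed (auto simp: extend_def extensional_def)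
qed

lemma avg_le:
  assumes "\<And>x. x \<in> A \<Longrightarrow> g x \<le> c" and "0 \<le> c"
  shows "avg A g \<le> c"
proof (cases "finite A \<and> A \<noteq> {}")
  case True
  then have "sum g A \<le> real (card A) * c" using sum_mono[of A g "\<lambda>_. c"] assms(1) by simp
  then show ?thesis using True by (simp add: avg_def pos_divide_le_eq card_gt_0_iff mult.commute)
next
  case False
  then show ?thesis using assms(2) by (auto simp: avg_def)
qed

lemma box_norm_ge_avg:
  fixes f :: "'a::{ab_group_add,finite} \<Rightarrow> real" and u :: "'v set \<Rightarrow> 'a \<Rightarrow> real"
  assumes f: "\<forall>y. f y \<in> {-1..1}" and u: "\<forall>\<phi>\<in>Phi. \<forall>y. u \<phi> y \<in> {-1..1}"
  shows "avg (PiE (sys_vars V0 Phi) (\<lambda>_. UNIV))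
      (\<lambda>x. f (\<Sum>v\<in>V0. x v) * (\<Prod>\<phi>\<in>Phi. u \<phi> (\<Sum>v\<in>\<phi>. x v))) \<le> box_norm V0 Phi f"
  unfolding box_norm_def
proof (rule cSup_upper)
  show "bdd_above {avg (PiE (sys_vars V0 Phi) (\<lambda>_. UNIV))
        (\<lambda>x. f (\<Sum>v\<in>V0. x v) * (\<Prod>\<phi>\<in>Phi. u \<phi> (\<Sum>v\<in>\<phi>. x v)))
      | u :: 'v set \<Rightarrow> 'a \<Rightarrow> real. \<forall>\<phi>\<in>Phi. \<forall>y. u \<phi> y \<in> {-1..1}}"
  proof (rule bdd_aboveI[where M = 1], clarify, rule avg_le)
    fix u :: "'v set \<Rightarrow> 'a \<Rightarrow> real" and x :: "'v \<Rightarrow> 'a"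
    assume "\<forall>\<phi>\<in>Phi. \<forall>y. u \<phi> y \<in> {-1..1}"
    then have u_bound: "\<bar>\<Prod>\<phi>\<in>Phi. u \<phi> (\<Sum>v\<in>\<phi>. x v)\<bar> \<le> 1"
      unfolding abs_prod by (intro prod_le_1) (auto simp: abs_le_iff)
    have f_bound: "\<bar>f (\<Sum>v\<in>V0. x v)\<bar> \<le> 1" using f by (simp add: abs_le_iff)
    have "\<bar>f (\<Sum>v\<in>V0. x v) * (\<Prod>\<phi>\<in>Phi. u \<phi> (\<Sum>v\<in>\<phi>. x v))\<bar> \<le> 1"
      unfolding abs_mult by (rule mult_le_one[OF f_bound abs_ge_zero u_bound])
    then show "f (\<Sum>v\<in>V0. x v) * (\<Prod>\<phi>\<in>Phi. u \<phi> (\<Sum>v\<in>\<phi>. x v)) \<le> 1" by simp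
  qed simp
qed (use u in blast)

definition flip_supp :: "nat \<Rightarrow> nat set \<Rightarrow> (nat \<times> nat) set" where
  "flip_supp k T = (V0_set k - Pair 0 ` T) \<union> Pair 1 ` T"

lemma V0_set_eq: "V0_set k = Pair 0 ` {1..k}"
  unfolding V0_set_def by auto

lemma mem_flip_supp:
  "(a, b) \<in> flip_supp k T \<longleftrightarrow> a = 0 \<and> 1 \<le> b \<and> b \<le> k \<and> b \<notin> T \<or> a = 1 \<and> b \<in> T"
  unfolding flip_supp_def V0_set_def by auto

lemma mem_phi_supp:
  "(a, b) \<in> phi_supp k d \<omega> \<longleftrightarrow>
     a = 0 \<and> 1 \<le> b \<and> b \<le> d + 1 \<and> \<omega> b = 0 \<or> a = 1 \<and> 1 \<le> b \<and> b \<le> d + 1 \<and> \<omega> b = 1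
     \<or> a = 0 \<and> d + 2 \<le> b \<and> b \<le> k"
  unfolding phi_supp_def by auto

lemma phi_supp_indicator:
  assumes "T \<subseteq> {1..d+1}" "d + 1 \<le> k"
  shows "phi_supp k d (\<lambda>i\<in>{1..d+1}. if i \<in> T then 1 else 0) = flip_supp k T"
proof (rule set_eqI)
  fix v :: "nat \<times> nat"
  show "v \<in> phi_supp k d (\<lambda>i\<in>{1..d+1}. if i \<in> T then 1 else 0) \<longleftrightarrow> v \<in> flip_supp k T"
    using assms by (cases v) (auto simp: mem_phi_supp mem_flip_supp subset_iff)
qed

lemma inj_flip_supp: "inj (flip_supp k)"
proof (rule injI, rule set_eqI)
  fix S T i assume "flip_supp k S = flip_supp k T"
  then have "(1, i) \<in> flip_supp k S \<longleftrightarrow> (1, i) \<in> flip_supp k T" by simp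
  then show "i \<in> S \<longleftrightarrow> i \<in> T" by (simp add: mem_flip_supp)
qed

lemma bij_betw_indicator_PiE:
  "bij_betw (\<lambda>T. \<lambda>i\<in>I. if i \<in> T then 1 else 0) (Pow I) (I \<rightarrow>\<^sub>E {0, 1 :: nat})"
proof (rule bij_betw_byWitness[where f' = "\<lambda>\<omega>. {i \<in> I. \<omega> i = 1}"])
  show "\<forall>\<omega>\<in>I \<rightarrow>\<^sub>E {0, 1}. (\<lambda>i\<in>I. if i \<in> {i \<in> I. \<omega> i = 1} then 1 else 0) = \<omega>"
    by (auto simp: fun_eq_iff PiE_iff extensional_def)
qed (auto split: if_splits)

lemma Phi1_eq:
  assumes "d + 1 \<le> k"
  shows "Phi1 k d = flip_supp k ` (Pow {1..d+1} - {{}})"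
proof -
  let ?\<omega> = "\<lambda>T. \<lambda>i\<in>{1..d+1}. if i \<in> T then 1 else (0::nat)"
  have bij: "bij_betw ?\<omega> (Pow {1..d+1}) ({1..d+1} \<rightarrow>\<^sub>E {0, 1})" by (rule bij_betw_indicator_PiE)
  have "?\<omega> ` (Pow {1..d+1} - {{}}) = ?\<omega> ` Pow {1..d+1} - ?\<omega> ` {{}}"
    using bij by (intro inj_on_image_set_diff) (auto simp: bij_betw_def)
  then have diff: "({1..d+1} \<rightarrow>\<^sub>E {0, 1}) - {(\<lambda>i\<in>{1..d+1}. 0)} = ?\<omega> ` (Pow {1..d+1} - {{}})"
    using bij by (simp add: bij_betw_def)
  show ?thesis unfolding Phi1_def diff image_image
    by (rule image_cong[OF refl], rule phi_supp_indicator[OF _ assms]) blast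
qed

lemma sys_vars_Phi1:
  assumes "d + 1 \<le> k"
  shows "sys_vars (V0_set k) (Phi1 k d) = V0_set k \<union> Pair 1 ` {1..d+1}"
proof -
  have "Pair 1 i \<in> flip_supp k {i}" for i by (simp add: mem_flip_supp)
  then have "Pair 1 ` {1..d+1} \<subseteq> \<Union>(flip_supp k ` (Pow {1..d+1} - {{}}))" by blast
  moreover have "\<Union>(flip_supp k ` (Pow {1..d+1} - {{}})) \<subseteq> V0_set k \<union> Pair 1 ` {1..d+1}"
  proof
    fix v assume "v \<in> \<Union>(flip_supp k ` (Pow {1..d+1} - {{}}))"
    then obtain T where "T \<subseteq> {1..d+1}" "v \<in> flip_supp k T" by auto
    then show "v \<in> V0_set k \<union> Pair 1 ` {1..d+1}"
      by (cases v) (auto simp: mem_flip_supp V0_set_def)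
  qed
  ultimately show ?thesis unfolding sys_vars_def Phi1_eq[OF assms] by blast
qed

lemma sum_flip_supp:
  fixes x :: "nat \<times> nat \<Rightarrow> 'a::ab_group_add"
  assumes "T \<subseteq> {1..k}"
  shows "(\<Sum>v\<in>flip_supp k T. x v) = (\<Sum>v\<in>V0_set k. x v) + (\<Sum>i\<in>T. x (1, i) - x (0, i))"
proof -
  have T: "finite T" "Pair 0 ` T \<subseteq> V0_set k" using assms finite_subset unfolding V0_set_eq by auto
  have "(\<Sum>v\<in>flip_supp k T. x v) = (\<Sum>v\<in>V0_set k - Pair 0 ` T. x v) + (\<Sum>v\<in>Pair 1 ` T. x v)"
    unfolding flip_supp_def using T by (intro sum.union_disjoint) (auto simp: V0_set_eq)
  also have "\<dots> = (\<Sum>v\<in>V0_set k. x v) - (\<Sum>i\<in>T. x (0, i)) + (\<Sum>i\<in>T. x (1, i))"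
    using T by (simp add: sum_diff sum.reindex inj_on_def V0_set_eq)
  finally show ?thesis by (simp add: sum_subtractf)
qed

lemma Phi1_integrand_eq_gowers_term:
  fixes f :: "'a::ab_group_add \<Rightarrow> real" and x :: "nat \<times> nat \<Rightarrow> 'a"
  assumes "d + 1 \<le> k"
  shows "f (\<Sum>v\<in>V0_set k. x v) * (\<Prod>\<phi>\<in>Phi1 k d. f (\<Sum>v\<in>\<phi>. x v))
       = gowers_term f {1..d+1} (\<Sum>v\<in>V0_set k. x v) (\<lambda>i. x (1, i) - x (0, i))"
proof -
  let ?y = "\<Sum>v\<in>V0_set k. x v" and ?h = "\<lambda>i. x (1, i) - x (0, i)"
  have Phi1_prod: "(\<Prod>\<phi>\<in>Phi1 k d. f (\<Sum>v\<in>\<phi>. x v))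
      = (\<Prod>T\<in>Pow {1..d+1} - {{}}. f (?y + (\<Sum>i\<in>T. ?h i)))"
    unfolding Phi1_eq[OF assms] prod.reindex[OF inj_on_subset[OF inj_flip_supp subset_UNIV]] comp_def
    using assms by (intro prod.cong refl arg_cong[where f = f] sum_flip_supp) auto
  show ?thesis unfolding gowers_term_def Phi1_prod by (subst prod.remove[of _ "{}"]) auto
qed

lemma avg_Phi1_eq_gowers:
  fixes f :: "'a::{ab_group_add,finite} \<Rightarrow> real"
  assumes "d + 1 \<le> k"
  shows "avg (PiE (sys_vars (V0_set k) (Phi1 k d)) (\<lambda>_. UNIV))
          (\<lambda>x. f (\<Sum>v\<in>V0_set k. x v) * (\<Prod>\<phi>\<in>Phi1 k d. f (\<Sum>v\<in>\<phi>. x v)))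
       = avg (UNIV \<times> PiE {1..d+1} (\<lambda>_. UNIV)) (\<lambda>(s, h). gowers_term f {1..d+1} s h)"
proof -
  let ?V = "V0_set k" and ?I = "{1..d+1}"
  let ?shear = "\<lambda>x. (restrict x ?V, \<lambda>i\<in>?I. x (1, i) - x (0, i))"
  have bij: "bij_betw ?shear (PiE (?V \<union> Pair 1 ` ?I) (\<lambda>_. UNIV))
      (PiE ?V (\<lambda>_. UNIV) \<times> PiE ?I (\<lambda>_. UNIV :: 'a set))"
    using assms by (intro bij_betw_shear[where a = "Pair 0" and b = "Pair 1"])
      (auto simp: V0_set_def inj_on_def)
  have "avg (PiE (sys_vars ?V (Phi1 k d)) (\<lambda>_. UNIV))
          (\<lambda>x. f (\<Sum>v\<in>?V. x v) * (\<Prod>\<phi>\<in>Phi1 k d. f (\<Sum>v\<in>\<phi>. x v)))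
      = avg (PiE (?V \<union> Pair 1 ` ?I) (\<lambda>_. UNIV))
          (\<lambda>x. (\<lambda>(y, h). gowers_term f ?I (\<Sum>v\<in>?V. y v) h) (?shear x))"
    unfolding sys_vars_Phi1[OF assms] Phi1_integrand_eq_gowers_term[OF assms] by (simp add: gowers_term_restrict)
  also have "\<dots> = avg (PiE ?V (\<lambda>_. UNIV) \<times> PiE ?I (\<lambda>_. UNIV)) (\<lambda>(y, h). gowers_term f ?I (\<Sum>v\<in>?V. y v) h)"
    by (rule avg_reindex_bij_betw[OF bij])
  also have "\<dots> = avg (UNIV \<times> PiE ?I (\<lambda>_. UNIV)) (\<lambda>(s, h). gowers_term f ?I s h)"
    using assms by (intro avg_PiE_sum) (auto simp: V0_set_eq)
  finally show ?thesis .
qed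

theorem mainTheorem7:
  fixes f :: "'a::{ab_group_add,finite} \<Rightarrow> real" and k d :: nat
  assumes "k \<ge> d + 1" and "d + 1 \<ge> 2"
    and "\<forall>y. f y \<in> {-1..1}"
  shows "box_norm (V0_set k) (Phi1 k d) f \<ge> gowers_norm (d + 1) f ^ (2 ^ (d + 1))"
proof -
  have "gowers_norm (d + 1) f ^ (2 ^ (d + 1))
      = avg (UNIV \<times> PiE {1..d+1} (\<lambda>_. UNIV)) (\<lambda>(s, h). gowers_term f {1..d+1} s h)"
    by (rule gowers_norm_power) simp
  also have "\<dots> = avg (PiE (sys_vars (V0_set k) (Phi1 k d)) (\<lambda>_. UNIV))
      (\<lambda>x. f (\<Sum>v\<in>V0_set k. x v) * (\<Prod>\<phi>\<in>Phi1 k d. f (\<Sum>v\<in>\<phi>. x v)))"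
    by (rule avg_Phi1_eq_gowers[OF assms(1), symmetric])
  also have "\<dots> \<le> box_norm (V0_set k) (Phi1 k d) f"
    using assms(3) by (intro box_norm_ge_avg) auto
  finally show ?thesis .
qed

end
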